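(* Let $d\ge5$ with $d\equiv1\pmod 4$, and let $g:\{-1,1\}^d\to\mathbb{R}$, $g(x)=|x_1+\dots+x_d|$, with Fourier coefficients $\hat g(S)$, $S\subseteq[d]$. Then for all $u\in[d]$, \[\sum_{S\subseteq[d],\,u\in S}|\hat g(S)|\ge\frac{2^{(d-1)/2}}{2\sqrt{d-1}}.\]
   Context: The Fourier coefficients of $g:\{-1,1\}^d\to\mathbb{R}$ are the unique reals $\hat g(S)$ with $g(x)=\sum_{S\subseteq[d]}\hat g(S)\prod_{i\in S}x_i$ for all $x$. *)

theory Defs
  imports Complex_Main
begin

definition cube :: "nat \<Rightarrow> (nat \<Rightarrow> real) set" where
  "cube d = {x. (\<forall>i\<in>{1..d}. x i = -1 \<or> x i = 1) \<and> (\<forall>i. i \<notin> {1..d} \<longrightarrow> x i = 0)}"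

definition fourier_coeff :: "nat \<Rightarrow> ((nat \<Rightarrow> real) \<Rightarrow> real) \<Rightarrow> nat set \<Rightarrow> real" where
  "fourier_coeff d g = (THE c. (\<forall>T. T \<notin> Pow {1..d} \<longrightarrow> c T = 0) \<and>
      (\<forall>x\<in>cube d. g x = (\<Sum>T\<in>Pow {1..d}. c T * (\<Prod>i\<in>T. x i))))"

end

theory Submission
  imports Defs
begin

text \<open>
  Weigh the coefficients by the signs eps(S) = sin (pi (|S| - 1) / 2) in {-1, 0, 1}: the
  left-hand side is at least the sum of eps(S) g^(S) over the sets S containing u. Writing
  S = insert u R, the generating identity sum_R i^|R| chi_R(x) = prod_j (1 + i x_j)
  = 2^(n/2) exp (i pi s / 4), where s is the sum of the other n = d - 1 coordinates, turns this
  into 2^(n/2 - d) sum_x |x_u + s| x_u sin (pi s / 4). Summing out x_u leaves 2^(n/2 - n) W_n,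
  where W_n = sum_k (n choose k) w (2k - n) and w s = sin (pi |s| / 4). On the integers
  w (s + 1) + w (s - 1) = sqrt 2 (w s + [s = 0]), hence W_(n+1) = sqrt 2 (W_n + Z_n) with Z_n the
  number of balanced +-1 walks of length n; four steps of this recurrence together with
  (2k choose k) >= 4^k / (2 sqrt k) give W_n >= 2^n / (2 sqrt n).
\<close>

definition cube_on :: "nat set \<Rightarrow> (nat \<Rightarrow> real) set" where
  "cube_on I = {x. (\<forall>i\<in>I. x i = -1 \<or> x i = 1) \<and> (\<forall>i. i \<notin> I \<longrightarrow> x i = 0)}"

definition chi :: "nat set \<Rightarrow> (nat \<Rightarrow> real) \<Rightarrow> real" where
  "chi S x = (\<Prod>i\<in>S. x i)"

lemma cube_eq_cube_on: "cube d = cube_on {1..d}"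
  unfolding cube_def cube_on_def by auto

lemma cube_on_empty: "cube_on {} = {\<lambda>_. 0}"
  unfolding cube_on_def by auto

lemma cube_on_outside: "x \<in> cube_on I \<Longrightarrow> i \<notin> I \<Longrightarrow> x i = 0"
  unfolding cube_on_def by auto

lemma cube_on_insert:
  assumes "a \<notin> I"
  shows "cube_on (insert a I) = (\<lambda>x. x(a := 1)) ` cube_on I \<union> (\<lambda>x. x(a := -1)) ` cube_on I"
proof (intro equalityI subsetI)
  fix x assume x: "x \<in> cube_on (insert a I)"
  then have "x(a := 0) \<in> cube_on I" and "x a = 1 \<or> x a = -1"
    using assms unfolding cube_on_def by auto
  moreover have "x = (x(a := 0))(a := x a)" by simp
  ultimately show "x \<in> (\<lambda>x. x(a := 1)) ` cube_on I \<union> (\<lambda>x. x(a := -1)) ` cube_on I"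
    by (metis UnI1 UnI2 image_eqI)
next
  fix x assume "x \<in> (\<lambda>x. x(a := 1)) ` cube_on I \<union> (\<lambda>x. x(a := -1)) ` cube_on I"
  then obtain y t where "y \<in> cube_on I" "t = 1 \<or> t = -1" "x = y(a := t)" by blast
  then show "x \<in> cube_on (insert a I)"
    unfolding cube_on_def by auto
qed

lemma finite_cube_on: "finite I \<Longrightarrow> finite (cube_on I)"
  by (induction I rule: finite_induct) (auto simp: cube_on_empty cube_on_insert)

lemma sum_cube_on_insert:
  assumes "finite I" "a \<notin> I"
  shows "(\<Sum>x\<in>cube_on (insert a I). F x) = (\<Sum>x\<in>cube_on I. F (x(a := 1)) + F (x(a := -1)))"
proof -
  have inj: "inj_on (\<lambda>x. x(a := t)) (cube_on I)" for t :: real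
    using cube_on_outside[OF _ assms(2)] by (intro inj_onI) (metis fun_upd_idem fun_upd_upd)
  have "(\<lambda>x. x(a := 1)) ` cube_on I \<inter> (\<lambda>x. x(a := -1)) ` cube_on I = {}"
    by (auto dest: fun_cong[of _ _ a])
  then have "(\<Sum>x\<in>cube_on (insert a I). F x)
      = (\<Sum>x\<in>(\<lambda>x. x(a := 1)) ` cube_on I. F x) + (\<Sum>x\<in>(\<lambda>x. x(a := -1)) ` cube_on I. F x)"
    unfolding cube_on_insert[OF assms(2)] using finite_cube_on[OF assms(1)]
    by (intro sum.union_disjoint) auto
  also have "\<dots> = (\<Sum>x\<in>cube_on I. F (x(a := 1))) + (\<Sum>x\<in>cube_on I. F (x(a := -1)))"
    by (simp add: sum.reindex[OF inj])
  finally show ?thesis by (simp add: sum.distrib)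
qed

lemma sum_cube_on_prod:
  fixes f :: "nat \<Rightarrow> real \<Rightarrow> 'a::comm_semiring_1"
  assumes "finite I"
  shows "(\<Sum>x\<in>cube_on I. \<Prod>i\<in>I. f i (x i)) = (\<Prod>i\<in>I. f i 1 + f i (-1))"
  using assms
proof (induction I rule: finite_induct)
  case (insert a I)
  have upd: "(\<Prod>i\<in>I. f i ((x(a := t)) i)) = (\<Prod>i\<in>I. f i (x i))" for x t
    using insert.hyps(2) by (intro prod.cong) auto
  have "(\<Sum>x\<in>cube_on (insert a I). \<Prod>i\<in>insert a I. f i (x i))
      = (\<Sum>x\<in>cube_on I. (f a 1 + f a (-1)) * (\<Prod>i\<in>I. f i (x i)))"
    unfolding sum_cube_on_insert[OF insert.hyps] prod.insert[OF insert.hyps] upd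
    by (simp add: algebra_simps)
  also have "\<dots> = (f a 1 + f a (-1)) * (\<Prod>i\<in>I. f i 1 + f i (-1))"
    by (simp add: sum_distrib_left[symmetric] insert.IH)
  finally show ?case using insert.hyps by simp
qed (simp add: cube_on_empty)

lemma chi_eq_prod_restrict:
  assumes "finite I" "S \<subseteq> I"
  shows "chi S x = (\<Prod>i\<in>I. if i \<in> S then x i else 1)"
  using assms by (simp add: chi_def prod.inter_restrict[symmetric] Int_absorb1)

lemma sum_cube_on_chi_chi:
  assumes "finite I" "S \<subseteq> I" "T \<subseteq> I"
  shows "(\<Sum>x\<in>cube_on I. chi S x * chi T x) = (if S = T then 2 ^ card I else 0)"
proof -
  define f where "f i t = (if i \<in> S then t else 1) * (if i \<in> T then t else 1)" for i and t :: real
  have "chi S x * chi T x = (\<Prod>i\<in>I. f i (x i))" for x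
    unfolding f_def chi_eq_prod_restrict[OF assms(1,2)] chi_eq_prod_restrict[OF assms(1,3)]
    by (rule prod.distrib[symmetric])
  then have "(\<Sum>x\<in>cube_on I. chi S x * chi T x) = (\<Sum>x\<in>cube_on I. \<Prod>i\<in>I. f i (x i))"
    by simp
  also have "\<dots> = (\<Prod>i\<in>I. f i 1 + f i (-1))"
    by (rule sum_cube_on_prod[OF assms(1)])
  also have "\<dots> = (if S = T then 2 ^ card I else 0)"
  proof (cases "S = T")
    case True
    then have "f i 1 + f i (-1) = 2" for i by (simp add: f_def)
    with True show ?thesis by simp
  next
    case False
    then obtain i where "i \<in> S - T \<union> (T - S)" by blast
    then have "i \<in> I" and "f i 1 + f i (-1) = 0" using assms(2,3) by (auto simp: f_def)
    then have "(\<Prod>i\<in>I. f i 1 + f i (-1)) = 0"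
      by (intro prod_zero[OF assms(1)]) blast
    with False show ?thesis by simp
  qed
  finally show ?thesis .
qed

lemma sum_Pow_chi_chi:
  assumes "finite I" "x \<in> cube_on I" "y \<in> cube_on I"
  shows "(\<Sum>T\<in>Pow I. chi T x * chi T y) = (if x = y then 2 ^ card I else 0)"
proof -
  have "(\<Sum>T\<in>Pow I. chi T x * chi T y) = (\<Sum>T\<in>Pow I. (\<Prod>i\<in>T. x i * y i) * (\<Prod>i\<in>I - T. 1))"
    unfolding chi_def by (simp add: prod.distrib)
  also have "\<dots> = (\<Prod>i\<in>I. x i * y i + 1)"
    by (rule prod_add[OF assms(1), symmetric])
  also have "\<dots> = (if x = y then 2 ^ card I else 0)"
  proof (cases "x = y")
    case True
    then have "(\<Prod>i\<in>I. x i * y i + 1) = (\<Prod>i\<in>I. 2)"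
      using assms(2) unfolding cube_on_def by (intro prod.cong) auto
    with True show ?thesis by simp
  next
    case False
    then obtain i where i: "x i \<noteq> y i" by auto
    then have "i \<in> I"
      using cube_on_outside[OF assms(2)] cube_on_outside[OF assms(3)] by force
    moreover have "x i = 1 \<or> x i = -1" "y i = 1 \<or> y i = -1"
      using \<open>i \<in> I\<close> assms(2,3) unfolding cube_on_def by auto
    ultimately have "x i * y i + 1 = 0"
      using i by auto
    with \<open>i \<in> I\<close> have "(\<Prod>i\<in>I. x i * y i + 1) = 0"
      by (intro prod_zero[OF assms(1)]) blast
    with False show ?thesis by simp
  qed
  finally show ?thesis .
qed

lemma fourier_inversion:
  assumes "finite I" "x \<in> cube_on I"
  shows "g x = (\<Sum>T\<in>Pow I. (\<Sum>y\<in>cube_on I. g y * chi T y) / 2 ^ card I * chi T x)"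
proof -
  have "(\<Sum>T\<in>Pow I. (\<Sum>y\<in>cube_on I. g y * chi T y) / 2 ^ card I * chi T x)
      = (\<Sum>T\<in>Pow I. \<Sum>y\<in>cube_on I. g y * (chi T y * chi T x)) / 2 ^ card I"
    by (simp add: sum_divide_distrib sum_distrib_right mult.assoc)
  also have "\<dots> = (\<Sum>y\<in>cube_on I. g y * (\<Sum>T\<in>Pow I. chi T y * chi T x)) / 2 ^ card I"
    by (simp add: sum.swap[of _ "Pow I"] sum_distrib_left)
  also have "\<dots> = g x"
    using assms finite_cube_on[OF assms(1)]
    by (simp add: sum_Pow_chi_chi if_distrib cong: if_cong)
  finally show ?thesis ..
qed

lemma fourier_coefficient_unique:
  assumes "finite I" "T \<subseteq> I"
    and expansion: "\<forall>x\<in>cube_on I. g x = (\<Sum>S\<in>Pow I. c S * chi S x)"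
  shows "c T = (\<Sum>x\<in>cube_on I. g x * chi T x) / 2 ^ card I"
proof -
  have "(\<Sum>x\<in>cube_on I. g x * chi T x) = (\<Sum>x\<in>cube_on I. \<Sum>S\<in>Pow I. c S * (chi S x * chi T x))"
    using expansion by (intro sum.cong) (simp_all add: sum_distrib_right mult.assoc)
  also have "\<dots> = (\<Sum>S\<in>Pow I. c S * (\<Sum>x\<in>cube_on I. chi S x * chi T x))"
    by (simp add: sum.swap[of _ "cube_on I"] sum_distrib_left)
  also have "\<dots> = c T * 2 ^ card I"
    using assms(1,2) by (simp add: sum_cube_on_chi_chi if_distrib cong: if_cong)
  finally show ?thesis by simp
qed

lemma fourier_coeff_eq:
  assumes "S \<subseteq> {1..d}"
  shows "fourier_coeff d g S = (\<Sum>x\<in>cube d. g x * chi S x) / 2 ^ d"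
proof -
  define c where "c T = (if T \<subseteq> {1..d} then (\<Sum>x\<in>cube d. g x * chi T x) / 2 ^ d else 0)" for T
  have "fourier_coeff d g = c"
    unfolding fourier_coeff_def
  proof (rule the_equality)
    have "\<forall>x\<in>cube d. g x = (\<Sum>T\<in>Pow {1..d}. c T * chi T x)"
      using fourier_inversion[of "{1..d}"] by (simp add: c_def cube_eq_cube_on)
    then show "(\<forall>T. T \<notin> Pow {1..d} \<longrightarrow> c T = 0) \<and>
        (\<forall>x\<in>cube d. g x = (\<Sum>T\<in>Pow {1..d}. c T * (\<Prod>i\<in>T. x i)))"
      by (simp add: c_def chi_def)
  next
    fix c' assume "(\<forall>T. T \<notin> Pow {1..d} \<longrightarrow> c' T = 0) \<and>
        (\<forall>x\<in>cube d. g x = (\<Sum>T\<in>Pow {1..d}. c' T * (\<Prod>i\<in>T. x i)))"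
    then show "c' = c"
      using fourier_coefficient_unique[of "{1..d}" _ g c']
      by (auto simp: c_def chi_def cube_eq_cube_on)
  qed
  with assms show ?thesis by (simp add: c_def)
qed

lemma prod_cis: "finite J \<Longrightarrow> (\<Prod>j\<in>J. cis (a j)) = cis (\<Sum>j\<in>J. a j)"
  by (induction J rule: finite_induct) (simp_all add: cis_mult)

lemma sum_Pow_sin_chi:
  assumes "finite J" "\<forall>j\<in>J. x j = 1 \<or> x j = -1"
  shows "(\<Sum>R\<in>Pow J. sin (pi * card R / 2) * chi R x)
    = sqrt 2 ^ card J * sin (pi * (\<Sum>j\<in>J. x j) / 4)"
proof -
  have factor: "\<i> * x j + 1 = sqrt 2 * cis (pi * x j / 4)" if "j \<in> J" for j
  proof -
    have "x j = 1 \<or> x j = -1" using assms(2) that by blast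
    then show ?thesis by (auto simp: complex_eq_iff sin_45 cos_45)
  qed
  have "(\<Sum>R\<in>Pow J. cis (pi * card R / 2) * chi R x)
      = (\<Sum>R\<in>Pow J. (\<Prod>j\<in>R. \<i> * x j) * (\<Prod>j\<in>J - R. 1))"
    using DeMoivre[of "pi / 2"] by (simp add: chi_def prod.distrib mult.commute)
  also have "\<dots> = (\<Prod>j\<in>J. \<i> * x j + 1)"
    by (rule prod_add[OF assms(1), symmetric])
  also have "\<dots> = (\<Prod>j\<in>J. sqrt 2 * cis (pi * x j / 4))"
    using factor by (rule prod.cong[OF refl])
  also have "\<dots> = sqrt 2 ^ card J * cis (pi * (\<Sum>j\<in>J. x j) / 4)"
    using assms(1) by (simp add: prod.distrib prod_cis sum_distrib_left sum_divide_distrib)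
  finally have "Im (\<Sum>R\<in>Pow J. cis (pi * card R / 2) * chi R x)
      = Im (sqrt 2 ^ card J * cis (pi * (\<Sum>j\<in>J. x j) / 4))"
    by simp
  then show ?thesis
    by (simp add: of_real_power[symmetric] del: of_real_power)
qed

definition walk_sum :: "nat \<Rightarrow> (real \<Rightarrow> real) \<Rightarrow> real" where
  "walk_sum n F = (\<Sum>k\<le>n. real (n choose k) * F (2 * real k - real n))"

lemma sum_binomial_Suc:
  fixes G :: "nat \<Rightarrow> real"
  shows "(\<Sum>k\<le>Suc n. real (Suc n choose k) * G k)
    = (\<Sum>k\<le>n. real (n choose k) * G k) + (\<Sum>k\<le>n. real (n choose k) * G (Suc k))"
proof -
  have "(\<Sum>k\<le>Suc n. real (Suc n choose k) * G k)
      = G 0 + (\<Sum>k\<le>n. real (Suc n choose Suc k) * G (Suc k))"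
    by (subst sum.atMost_Suc_shift) simp
  also have "\<dots> = G 0 + (\<Sum>k\<le>n. real (n choose Suc k) * G (Suc k))
      + (\<Sum>k\<le>n. real (n choose k) * G (Suc k))"
    by (simp add: sum.distrib algebra_simps)
  also have "G 0 + (\<Sum>k\<le>n. real (n choose Suc k) * G (Suc k)) = (\<Sum>k\<le>Suc n. real (n choose k) * G k)"
    by (simp add: sum.atMost_Suc_shift del: sum.atMost_Suc)
  also have "\<dots> = (\<Sum>k\<le>n. real (n choose k) * G k)"
    by simp
  finally show ?thesis .
qed

lemma walk_sum_Suc: "walk_sum (Suc n) F = walk_sum n (\<lambda>s. F (s + 1) + F (s - 1))"
  unfolding walk_sum_def sum_binomial_Suc
  by (simp add: sum.distrib algebra_simps)

lemma sum_fun_upd_notin: "a \<notin> J \<Longrightarrow> (\<Sum>j\<in>J. (y(a := t)) j) = (\<Sum>j\<in>J. y j)"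
  by (intro sum.cong) auto

lemma sum_insert_fun_upd:
  fixes y :: "nat \<Rightarrow> real"
  assumes "finite J" "a \<notin> J"
  shows "(\<Sum>j\<in>insert a J. (y(a := t)) j) = (\<Sum>j\<in>J. y j) + t"
  by (simp only: sum.insert[OF assms] fun_upd_same sum_fun_upd_notin[OF assms(2)] add.commute)

lemma sum_cube_on_coordinate_sum:
  assumes "finite J"
  shows "(\<Sum>y\<in>cube_on J. F (\<Sum>j\<in>J. y j)) = walk_sum (card J) F"
  using assms
proof (induction J arbitrary: F rule: finite_induct)
  case empty
  then show ?case by (simp add: cube_on_empty walk_sum_def)
next
  case (insert a J)
  have "(\<Sum>y\<in>cube_on (insert a J). F (\<Sum>j\<in>insert a J. y j))
      = (\<Sum>y\<in>cube_on J. F ((\<Sum>j\<in>J. y j) + 1) + F ((\<Sum>j\<in>J. y j) - 1))"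
    unfolding sum_cube_on_insert[OF insert.hyps] sum_insert_fun_upd[OF insert.hyps] by simp
  also have "\<dots> = walk_sum (card (insert a J)) F"
    using insert by (simp add: walk_sum_Suc)
  finally show ?case .
qed

lemma walk_sum_cong_Ints:
  "(\<And>s. s \<in> \<int> \<Longrightarrow> F s = G s) \<Longrightarrow> walk_sum n F = walk_sum n G"
  unfolding walk_sum_def by (intro sum.cong refl) simp

lemma walk_sum_add: "walk_sum n (\<lambda>s. F s + G s) = walk_sum n F + walk_sum n G"
  unfolding walk_sum_def by (simp add: sum.distrib distrib_left)

lemma walk_sum_scale: "walk_sum n (\<lambda>s. c * F s) = c * walk_sum n F"
  unfolding walk_sum_def by (simp add: sum_distrib_left mult.left_commute)

lemma walk_sum_nonneg: "(\<And>s. F s \<ge> 0) \<Longrightarrow> walk_sum n F \<ge> 0"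
  unfolding walk_sum_def by (intro sum_nonneg mult_nonneg_nonneg) auto

lemma walk_sum_zero_indicator: "walk_sum (2 * j) (\<lambda>s. of_bool (s = 0)) = real (2 * j choose j)"
proof -
  have "(2 * real k - real (2 * j) = 0) \<longleftrightarrow> k = j" for k
    by auto
  then show ?thesis by (simp add: walk_sum_def of_bool_def if_distrib cong: if_cong)
qed

definition abs_sine :: "real \<Rightarrow> real" where
  "abs_sine s = sin (pi * \<bar>s\<bar> / 4)"

lemma abs_sine_recurrence:
  assumes "s \<in> \<int>"
  shows "abs_sine (s + 1) + abs_sine (s - 1) = sqrt 2 * (abs_sine s + of_bool (s = 0))"
proof (cases "s = 0")
  case True
  then show ?thesis by (simp add: abs_sine_def sin_45)
next
  case False
  with assms have "\<bar>s\<bar> \<ge> 1" by (rule Ints_nonzero_abs_ge1)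
  then have "abs_sine (s + 1) + abs_sine (s - 1) = abs_sine (\<bar>s\<bar> + 1) + abs_sine (\<bar>s\<bar> - 1)"
    by (cases "s \<ge> 0") (auto simp: abs_sine_def)
  also have "\<dots> = sin (pi * \<bar>s\<bar> / 4 + pi / 4) + sin (pi * \<bar>s\<bar> / 4 - pi / 4)"
    using \<open>\<bar>s\<bar> \<ge> 1\<close> by (simp add: abs_sine_def algebra_simps add_divide_distrib diff_divide_distrib)
  also have "\<dots> = sqrt 2 * abs_sine s"
    by (simp add: abs_sine_def sin_add sin_diff sin_45 cos_45)
  finally show ?thesis using False by simp
qed

lemma abs_sum_sign_sine:
  assumes "s \<in> \<int>"
  shows "(\<bar>s + 1\<bar> - \<bar>s - 1\<bar>) * sin (pi * s / 4) = 2 * abs_sine s"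
proof -
  have "s \<ge> 1 \<or> s = 0 \<or> s \<le> -1"
    using assms Ints_nonzero_abs_ge1 by fastforce
  then show ?thesis
    by (auto simp: abs_sine_def)
qed

lemma walk_sum_abs_sine_Suc:
  "walk_sum (Suc n) abs_sine = sqrt 2 * (walk_sum n abs_sine + walk_sum n (\<lambda>s. of_bool (s = 0)))"
proof -
  have "walk_sum (Suc n) abs_sine = walk_sum n (\<lambda>s. sqrt 2 * (abs_sine s + of_bool (s = 0)))"
    unfolding walk_sum_Suc by (rule walk_sum_cong_Ints) (rule abs_sine_recurrence)
  then show ?thesis
    by (simp only: walk_sum_scale walk_sum_add)
qed

lemma walk_sum_abs_sine_nonneg: "walk_sum n abs_sine \<ge> 0"
proof (induction n)
  case 0
  then show ?case by (simp add: walk_sum_def abs_sine_def)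
next
  case (Suc n)
  then show ?case
    by (simp add: walk_sum_abs_sine_Suc walk_sum_nonneg)
qed

lemma walk_sum_abs_sine_Suc_Suc:
  "2 * (walk_sum n abs_sine + walk_sum n (\<lambda>s. of_bool (s = 0))) \<le> walk_sum (Suc (Suc n)) abs_sine"
proof -
  have "sqrt 2 * walk_sum (Suc n) abs_sine \<le> walk_sum (Suc (Suc n)) abs_sine"
    unfolding walk_sum_abs_sine_Suc[of "Suc n"]
    by (intro mult_left_mono) (simp_all add: walk_sum_nonneg)
  then show ?thesis
    by (simp add: walk_sum_abs_sine_Suc[of n] mult.assoc[symmetric])
qed

lemma walk_sum_abs_sine_ge_central_binomials:
  "4 * real (2 * j choose j) + 2 * real (2 * Suc j choose Suc j) \<le> walk_sum (2 * j + 4) abs_sine"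
proof -
  let ?W = "\<lambda>n. walk_sum n abs_sine" and ?Z = "\<lambda>n. walk_sum n (\<lambda>s. of_bool (s = 0))"
  have "2 * ?Z (2 * j) \<le> ?W (2 * j + 2)"
    using walk_sum_abs_sine_Suc_Suc[of "2 * j"] walk_sum_abs_sine_nonneg[of "2 * j"] by simp
  moreover have "2 * (?W (2 * j + 2) + ?Z (2 * j + 2)) \<le> ?W (2 * j + 4)"
    using walk_sum_abs_sine_Suc_Suc[of "2 * j + 2"] by (simp add: numeral_eq_Suc)
  moreover have "?Z (2 * j + 2) = real (2 * Suc j choose Suc j)"
    using walk_sum_zero_indicator[of "Suc j"] by simp
  moreover have "?Z (2 * j) = real (2 * j choose j)"
    by (rule walk_sum_zero_indicator)
  ultimately show ?thesis
    by argo
qed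

lemma central_binomial_Suc:
  "Suc j * (2 * Suc j choose Suc j) = 2 * (2 * j + 1) * (2 * j choose j)"
proof -
  have "Suc j * (2 * Suc j choose Suc j) = 2 * (Suc j * (Suc (2 * j) choose j))"
    using Suc_times_binomial[of j "Suc (2 * j)"] by (simp del: binomial_Suc_Suc)
  also have "Suc j * (Suc (2 * j) choose j) = Suc j * (Suc (2 * j) choose Suc j)"
    using binomial_symmetric[of j "Suc (2 * j)"] by simp
  also have "\<dots> = (2 * j + 1) * (2 * j choose j)"
    using Suc_times_binomial[of j "2 * j"] by simp
  finally show ?thesis by simp
qed

lemma central_binomial_squared_lower_bound:
  "1 \<le> j \<Longrightarrow> 16 ^ j \<le> 4 * real j * real (2 * j choose j) ^ 2"
proof (induction j rule: nat_induct_at_least)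
  case base
  then show ?case by simp
next
  case (Suc j)
  define c where "c = real (2 * j choose j)"
  define c' where "c' = real (2 * Suc j choose Suc j)"
  have recurrence: "(real j + 1) * c' = 2 * (2 * real j + 1) * c"
    using arg_cong[OF central_binomial_Suc[of j], of real] by (simp add: c_def c'_def algebra_simps)
  have "(real j + 1) * 16 ^ Suc j = 16 * (real j + 1) * 16 ^ j"
    by simp
  also have "\<dots> \<le> 16 * (real j + 1) * (4 * real j * c ^ 2)"
    using Suc.IH by (intro mult_left_mono) (simp_all add: c_def)
  also have "\<dots> \<le> 16 * (2 * real j + 1) ^ 2 * c ^ 2"
    by (simp add: power2_eq_square algebra_simps)
  also have "\<dots> = 4 * (2 * (2 * real j + 1) * c) ^ 2"
    by (simp add: power2_eq_square algebra_simps)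
  also have "\<dots> = (real j + 1) * (4 * (real j + 1) * c' ^ 2)"
    unfolding recurrence[symmetric] by (simp add: power2_eq_square)
  finally have "16 ^ Suc j \<le> 4 * (real j + 1) * c' ^ 2"
    by (rule mult_left_le_imp_le) simp
  then show ?case
    by (simp add: c'_def add.commute del: binomial_Suc_Suc)
qed

lemma walk_sum_abs_sine_lower_bound:
  assumes "2 \<le> m"
  shows "2 ^ (2 * m) \<le> 2 * sqrt (2 * m) * walk_sum (2 * m) abs_sine"
proof -
  define j where "j = m - 2"
  have m: "2 * m = 2 * j + 4" using assms by (simp add: j_def)
  define a where "a = real (2 * j choose j)"
  define b where "b = real (2 * Suc j choose Suc j)"
  have "(real j + 1) * b = 2 * (2 * real j + 1) * a"
    using arg_cong[OF central_binomial_Suc[of j], of real] by (simp add: a_def b_def algebra_simps)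
  also have "\<dots> \<le> (real j + 1) * (4 * a)"
    by (simp add: a_def algebra_simps)
  finally have "b \<le> 4 * a"
    by (rule mult_left_le_imp_le) simp
  then have "3 * b \<le> walk_sum (2 * m) abs_sine"
    using walk_sum_abs_sine_ge_central_binomials[of j] by (simp add: m a_def b_def)
  have "(2 ^ (2 * m)) ^ 2 = 16 * (16 :: real) ^ Suc j"
    using power_mult[of "2 :: real" 4 j] by (simp add: m power_mult[symmetric] power_add)
  also have "\<dots> \<le> 16 * (4 * real (Suc j) * b ^ 2)"
    using central_binomial_squared_lower_bound[of "Suc j"] by (simp add: b_def)
  also have "\<dots> = 64 * real (Suc j) * b ^ 2"
    by simp
  also have "\<dots> \<le> 72 * real m * b ^ 2"
    using assms by (intro mult_right_mono) (simp_all add: j_def)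
  also have "\<dots> = (6 * b * sqrt (2 * m)) ^ 2"
    by (simp add: power_mult_distrib)
  finally have "2 ^ (2 * m) \<le> 6 * b * sqrt (2 * m)"
    by (rule power2_le_imp_le) (simp add: b_def)
  also have "\<dots> \<le> 2 * sqrt (2 * m) * walk_sum (2 * m) abs_sine"
    using mult_right_mono[OF \<open>3 * b \<le> walk_sum (2 * m) abs_sine\<close>, of "2 * sqrt (2 * m)"]
    by (simp add: algebra_simps)
  finally show ?thesis .
qed

lemma Pow_containing_eq_image_insert:
  assumes "u \<in> I"
  shows "{S \<in> Pow I. u \<in> S} = insert u ` Pow (I - {u})"
proof (intro equalityI subsetI)
  fix S assume "S \<in> {S \<in> Pow I. u \<in> S}"
  then have "S = insert u (S - {u})" and "S - {u} \<in> Pow (I - {u})" by auto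
  then show "S \<in> insert u ` Pow (I - {u})" by (rule image_eqI)
qed (use assms in auto)

lemma sum_containing_sin_fourier_coeff:
  assumes "u \<in> {1..d}"
  shows "(\<Sum>S\<in>{S \<in> Pow {1..d}. u \<in> S}. sin (pi * real (card S - 1) / 2) * fourier_coeff d g S)
    = sqrt 2 ^ (d - 1) / 2 ^ d * (\<Sum>x\<in>cube d. g x * x u * sin (pi * (\<Sum>j\<in>{1..d} - {u}. x j) / 4))"
proof -
  define J where "J = {1..d} - {u}"
  have J: "finite J" "u \<notin> J" "card J = d - 1"
    using assms by (auto simp: J_def)
  have inj: "inj_on (insert u) (Pow J)"
    using J(2) by (intro inj_onI) (auto simp: insert_ident)
  have "(\<Sum>S\<in>{S \<in> Pow {1..d}. u \<in> S}. sin (pi * real (card S - 1) / 2) * fourier_coeff d g S)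
      = (\<Sum>R\<in>Pow J. sin (pi * card R / 2) * ((\<Sum>x\<in>cube d. g x * (x u * chi R x)) / 2 ^ d))"
  proof -
    have "chi (insert u R) x = x u * chi R x" "card (insert u R) - 1 = card R" "insert u R \<subseteq> {1..d}"
      if "R \<in> Pow J" for R x
    proof -
      from that J(1,2) have "finite R" "u \<notin> R" "R \<subseteq> J"
        using finite_subset by auto
      then show "chi (insert u R) x = x u * chi R x" "card (insert u R) - 1 = card R"
          "insert u R \<subseteq> {1..d}"
        using assms by (auto simp: chi_def J_def)
    qed
    then show ?thesis
      unfolding Pow_containing_eq_image_insert[OF assms] J_def[symmetric]
      by (simp add: sum.reindex[OF inj] fourier_coeff_eq)
  qed
  also have "\<dots> = (\<Sum>x\<in>cube d. g x * x u * (\<Sum>R\<in>Pow J. sin (pi * card R / 2) * chi R x)) / 2 ^ d"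
    by (simp add: sum_divide_distrib sum_distrib_left sum.swap[of _ "Pow J"] mult_ac)
  also have "\<dots> = (\<Sum>x\<in>cube d. g x * x u * (sqrt 2 ^ card J * sin (pi * (\<Sum>j\<in>J. x j) / 4))) / 2 ^ d"
  proof -
    have "\<forall>j\<in>J. x j = 1 \<or> x j = -1" if "x \<in> cube d" for x
      using that by (auto simp: cube_def J_def)
    then show ?thesis
      using J(1) by (simp add: sum_Pow_sin_chi)
  qed
  also have "\<dots> = sqrt 2 ^ (d - 1) / 2 ^ d * (\<Sum>x\<in>cube d. g x * x u * sin (pi * (\<Sum>j\<in>J. x j) / 4))"
    by (simp add: J(3) sum_distrib_left sum_divide_distrib mult_ac)
  finally show ?thesis
    unfolding J_def .
qed

lemma sum_cube_on_times_coordinate: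
  assumes "finite J" "u \<notin> J"
  shows "(\<Sum>x\<in>cube_on (insert u J). G (\<Sum>i\<in>insert u J. x i) * x u * H (\<Sum>j\<in>J. x j))
    = walk_sum (card J) (\<lambda>s. (G (s + 1) - G (s - 1)) * H s)"
proof -
  have "(\<Sum>x\<in>cube_on (insert u J). G (\<Sum>i\<in>insert u J. x i) * x u * H (\<Sum>j\<in>J. x j))
      = (\<Sum>y\<in>cube_on J. (G ((\<Sum>j\<in>J. y j) + 1) - G ((\<Sum>j\<in>J. y j) - 1)) * H (\<Sum>j\<in>J. y j))"
    unfolding sum_cube_on_insert[OF assms] sum_insert_fun_upd[OF assms] sum_fun_upd_notin[OF assms(2)]
    by (simp add: algebra_simps)
  also have "\<dots> = walk_sum (card J) (\<lambda>s. (G (s + 1) - G (s - 1)) * H s)"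
    by (rule sum_cube_on_coordinate_sum[OF assms(1)])
  finally show ?thesis .
qed

lemma sum_containing_sin_fourier_coeff_abs_sum:
  assumes "u \<in> {1..d}"
  shows "(\<Sum>S\<in>{S \<in> Pow {1..d}. u \<in> S}.
            sin (pi * real (card S - 1) / 2) * fourier_coeff d (\<lambda>x. \<bar>\<Sum>i=1..d. x i\<bar>) S)
    = sqrt 2 ^ (d - 1) * walk_sum (d - 1) abs_sine / 2 ^ (d - 1)"
proof -
  define J where "J = {1..d} - {u}"
  have J: "finite J" "u \<notin> J" "card J = d - 1" "{1..d} = insert u J"
    using assms by (auto simp: J_def)
  have "(\<Sum>x\<in>cube d. \<bar>\<Sum>i=1..d. x i\<bar> * x u * sin (pi * (\<Sum>j\<in>J. x j) / 4))
      = walk_sum (d - 1) (\<lambda>s. (\<bar>s + 1\<bar> - \<bar>s - 1\<bar>) * sin (pi * s / 4))"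
    using sum_cube_on_times_coordinate[OF J(1,2), of abs "\<lambda>s. sin (pi * s / 4)"]
    unfolding cube_eq_cube_on J(3,4) .
  also have "\<dots> = 2 * walk_sum (d - 1) abs_sine"
    by (simp add: walk_sum_cong_Ints[OF abs_sum_sign_sine] walk_sum_scale)
  finally have "(\<Sum>x\<in>cube d. \<bar>\<Sum>i=1..d. x i\<bar> * x u * sin (pi * (\<Sum>j\<in>J. x j) / 4))
      = 2 * walk_sum (d - 1) abs_sine" .
  moreover have "(2 :: real) ^ d = 2 * 2 ^ (d - 1)"
    using assms by (simp add: power_Suc[symmetric])
  ultimately show ?thesis
    unfolding sum_containing_sin_fourier_coeff[OF assms] J_def[symmetric] by simp
qed

theorem lemma25:
  fixes d u :: nat
  assumes "d \<ge> 5" and "d mod 4 = 1" and "u \<in> {1..d}"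
  shows "(\<Sum>S\<in>{S\<in>Pow {1..d}. u \<in> S}.
            \<bar>fourier_coeff d (\<lambda>x. \<bar>\<Sum>i=1..d. x i\<bar>) S\<bar>)
         \<ge> 2 powr ((real d - 1) / 2) / (2 * sqrt (real d - 1))"
proof -
  let ?c = "fourier_coeff d (\<lambda>x. \<bar>\<Sum>i=1..d. x i\<bar>)"
  define n where "n = d - 1"
  define m where "m = n div 2"
  have n: "n = 2 * m" "2 \<le> m" "real d - 1 = real n"
    using assms(1,2) unfolding m_def n_def by (presburger, presburger, simp)
  have "sin t * c \<le> \<bar>c\<bar>" for t c :: real
    by (rule order_trans[OF abs_ge_self]) (simp add: abs_mult mult_left_le_one_le)
  then have coeff_sum_ge: "sqrt 2 ^ n * walk_sum n abs_sine / 2 ^ n \<le> (\<Sum>S\<in>{S\<in>Pow {1..d}. u \<in> S}. \<bar>?c S\<bar>)"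
    unfolding n_def sum_containing_sin_fourier_coeff_abs_sum[OF assms(3), symmetric]
    by (intro sum_mono)
  have "2 ^ n \<le> 2 * sqrt n * walk_sum n abs_sine"
    using walk_sum_abs_sine_lower_bound[OF n(2)] by (simp add: n(1))
  then have target_le: "sqrt 2 ^ n / (2 * sqrt n) \<le> sqrt 2 ^ n * walk_sum n abs_sine / 2 ^ n"
    using n by (simp add: field_simps)
  have "2 powr (real n / 2) = sqrt 2 ^ n"
    by (simp add: powr_half_sqrt_powr powr_realpow real_sqrt_power)
  then show ?thesis
    unfolding n(3) using order_trans[OF target_le coeff_sum_ge] by simp
qed

end
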